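(* Assume (A2). Then for every $n\ge0$ and all $(x,t)\in K_{R^*,T^*}$, $\phi_{n+1}(x,t)\ge\phi_n(x,t)\ge0$ and $\psi_{n+1}(x,t)\ge\psi_n(x,t)\ge0$.
   Context: Let $p>1$ and $\mu>0$ with $p<1+2/\mu$, and let $R^*,T^*>0$. Write $B_R=\{x\in\mathbb{R}:|x|<R\}$. Fix constants $\gamma_1,\gamma_2>0$ with $\gamma_1+\gamma_2>\max\big(1,(\mu p 2^p)^{1/(p-1)}\big)$ (standing assumption). Let $f,g$ be real functions on $\mathbb{R}$. Assumption (A2): $f\ge\gamma_1$ and $g\ge\gamma_2$ on $B_{R^*+T^*}$. Let $K_{R^*,T^*}=\{(x,t):t>0,\ |x-x_0|<T^*-t\ \text{for some } x_0\in B_{R^*}\}$. Define iterates $\phi_0\equiv\gamma_1$, $\psi_0\equiv\gamma_2$ and, with $\mathcal{N}_n(x,s)=2^{-p}|\phi_n+\psi_n|^p(x,s)-\frac{\mu}{1+s}\frac{(\phi_n+\psi_n)(x,s)}{2}$, $\phi_{n+1}(x,t)=f(x+t)+\int_0^t\mathcal{N}_n(x+t-s,s)\,ds$, $\psi_{n+1}(x,t)=g(x-t)+\int_0^t\mathcal{N}_n(x-t+s,s)\,ds$. *)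

theory Defs
  imports "HOL-Analysis.Analysis"
begin

definition Nl :: "real \<Rightarrow> real \<Rightarrow> (real \<Rightarrow> real \<Rightarrow> real) \<Rightarrow> (real \<Rightarrow> real \<Rightarrow> real)
                   \<Rightarrow> real \<Rightarrow> real \<Rightarrow> real" where
  "Nl p \<mu> \<phi> \<psi> x s =
     2 powr (-p) * \<bar>\<phi> x s + \<psi> x s\<bar> powr p - \<mu> / (1 + s) * ((\<phi> x s + \<psi> x s) / 2)"

primrec iter :: "real \<Rightarrow> real \<Rightarrow> real \<Rightarrow> real \<Rightarrow> (real \<Rightarrow> real) \<Rightarrow> (real \<Rightarrow> real) \<Rightarrow> nat
                 \<Rightarrow> (real \<Rightarrow> real \<Rightarrow> real) \<times> (real \<Rightarrow> real \<Rightarrow> real)" where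
  "iter p \<mu> \<gamma>1 \<gamma>2 f g 0 = ((\<lambda>x t. \<gamma>1), (\<lambda>x t. \<gamma>2))"
| "iter p \<mu> \<gamma>1 \<gamma>2 f g (Suc n) =
     (let \<phi> = fst (iter p \<mu> \<gamma>1 \<gamma>2 f g n); \<psi> = snd (iter p \<mu> \<gamma>1 \<gamma>2 f g n) in
      ((\<lambda>x t. f (x + t) + integral {0..t} (\<lambda>s. Nl p \<mu> \<phi> \<psi> (x + t - s) s)),
       (\<lambda>x t. g (x - t) + integral {0..t} (\<lambda>s. Nl p \<mu> \<phi> \<psi> (x - t + s) s))))"

definition Kset :: "real \<Rightarrow> real \<Rightarrow> (real \<times> real) set" where
  "Kset R T = {(x, t). t > 0 \<and> (\<exists>x0. \<bar>x0\<bar> < R \<and> \<bar>x - x0\<bar> < T - t)}"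

end

theory Submission
  imports Defs
begin

(* Write N_n(y,s) = F_s(phi_n + psi_n), where for w >= 0
     F_s(w) = 2^(-p) w^p - mu w / (2 (1+s)) = (w/2) ((w/2)^(p-1) - mu/(1+s)).
   The threshold on gamma = gamma1 + gamma2 gives mu <= (gamma/2)^(p-1), so F_s is nonnegative and
   nondecreasing on [gamma, oo).  Characteristics through a point of the cone stay in the cone and
   start inside B_{R+T}, where f >= gamma1 and g >= gamma2.  Hence N_0 >= 0 gives phi_1 >= phi_0 =
   gamma1, and if gamma <= phi_n + psi_n <= phi_{n+1} + psi_{n+1} along the characteristics then
   N_n <= N_{n+1} there, so phi_{n+1} <= phi_{n+2}; likewise for psi.  All integrals compared are
   integrals of continuous functions, since the iterates are continuous on the cone by the same
   induction. *)

definition Nl_profile :: "real \<Rightarrow> real \<Rightarrow> real \<Rightarrow> real \<Rightarrow> real" where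
  "Nl_profile p \<mu> s w = 2 powr (-p) * \<bar>w\<bar> powr p - \<mu> / (1 + s) * (w / 2)"

lemma Nl_eq_Nl_profile: "Nl p \<mu> \<phi> \<psi> x s = Nl_profile p \<mu> s (\<phi> x s + \<psi> x s)"
  by (simp add: Nl_def Nl_profile_def)

lemma Nl_profile_factor:
  assumes "w \<ge> 0"
  shows "Nl_profile p \<mu> s w = w / 2 * ((w / 2) powr (p - 1) - \<mu> / (1 + s))"
proof (cases "w = 0")
  case False
  then have "2 powr (-p) * w powr p = (w / 2) powr p"
    using assms by (simp add: powr_divide powr_minus_divide)
  also have "\<dots> = w / 2 * (w / 2) powr (p - 1)"
    using False assms by (simp add: powr_diff)
  finally show ?thesis
    using assms by (simp add: Nl_profile_def algebra_simps)
qed (simp add: Nl_profile_def)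

lemma damping_le_half_powr:
  fixes p \<mu> \<gamma> s w :: real
  assumes "p \<ge> 1" "\<mu> \<le> (\<gamma> / 2) powr (p - 1)" "0 \<le> \<gamma>" "\<gamma> \<le> w" "s \<ge> 0"
  shows "\<mu> / (1 + s) \<le> (w / 2) powr (p - 1)"
proof (cases "\<mu> \<ge> 0")
  case True
  have "\<mu> / (1 + s) \<le> \<mu>"
    using True assms(5) frac_le[of \<mu> \<mu> 1 "1 + s"] by simp
  also have "\<dots> \<le> (\<gamma> / 2) powr (p - 1)"
    by (rule assms(2))
  also have "\<dots> \<le> (w / 2) powr (p - 1)"
    using assms by (intro powr_mono2) auto
  finally show ?thesis .
next
  case False
  then have "\<mu> / (1 + s) \<le> 0"
    using assms(5) by (simp add: divide_nonpos_pos)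
  then show ?thesis
    by (meson order.trans powr_ge_zero)
qed

lemma Nl_profile_nonneg:
  fixes p \<mu> \<gamma> s w :: real
  assumes "p \<ge> 1" "\<mu> \<le> (\<gamma> / 2) powr (p - 1)" "0 \<le> \<gamma>" "\<gamma> \<le> w" "s \<ge> 0"
  shows "0 \<le> Nl_profile p \<mu> s w"
  using damping_le_half_powr[OF assms] assms
  by (simp add: Nl_profile_factor)

lemma Nl_profile_mono:
  fixes p \<mu> \<gamma> s u v :: real
  assumes "p \<ge> 1" "\<mu> \<le> (\<gamma> / 2) powr (p - 1)" "0 \<le> \<gamma>" "\<gamma> \<le> u" "u \<le> v" "s \<ge> 0"
  shows "Nl_profile p \<mu> s u \<le> Nl_profile p \<mu> s v"
proof -
  have "(u / 2) powr (p - 1) \<le> (v / 2) powr (p - 1)"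
    using assms by (intro powr_mono2) auto
  then have "u / 2 * ((u / 2) powr (p - 1) - \<mu> / (1 + s)) \<le> v / 2 * ((v / 2) powr (p - 1) - \<mu> / (1 + s))"
    using damping_le_half_powr[OF assms(1-4,6)] assms by (intro mult_mono) auto
  then show ?thesis
    using assms by (simp add: Nl_profile_factor)
qed

lemma threshold_le_half_powr:
  fixes p \<mu> \<gamma> :: real
  assumes "p > 1" "\<mu> > 0" "(\<mu> * p * 2 powr p) powr (1 / (p - 1)) < \<gamma>"
  shows "\<mu> \<le> (\<gamma> / 2) powr (p - 1)"
proof -
  have pos: "\<mu> * p * 2 powr p > 0"
    using assms by simp
  then have "\<mu> * p * 2 powr p = ((\<mu> * p * 2 powr p) powr (1 / (p - 1))) powr (p - 1)"
    using assms(1) by (simp add: powr_powr)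
  also have "\<dots> < \<gamma> powr (p - 1)"
    using assms pos by (intro powr_less_mono2) auto
  finally have "\<mu> * p * 2 * 2 powr (p - 1) < (\<gamma> / 2) powr (p - 1) * 2 powr (p - 1)"
    using assms pos by (simp add: powr_divide powr_diff)
  then have "\<mu> * p * 2 < (\<gamma> / 2) powr (p - 1)"
    by simp
  moreover have "\<mu> \<le> \<mu> * p * 2"
    using assms by simp
  ultimately show ?thesis
    by linarith
qed

(* K_{R,T} together with its base t = 0, which the integrals defining the iterates reach. *)
definition dependence_cone :: "real \<Rightarrow> real \<Rightarrow> (real \<times> real) set" where
  "dependence_cone R T = {(x, t). 0 \<le> t \<and> (\<exists>x0. \<bar>x0\<bar> < R \<and> \<bar>x - x0\<bar> < T - t)}"

lemma Kset_subset_dependence_cone: "Kset R T \<subseteq> dependence_cone R T"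
  by (auto simp: Kset_def dependence_cone_def)

lemma dependence_cone_nonneg: "(x, t) \<in> dependence_cone R T \<Longrightarrow> 0 \<le> t"
  by (simp add: dependence_cone_def)

lemma characteristic_in_dependence_cone:
  assumes "(x, t) \<in> dependence_cone R T" "s \<in> {0..t}" "\<bar>\<sigma>\<bar> \<le> 1"
  shows "(x + \<sigma> * (t - s), s) \<in> dependence_cone R T"
proof -
  obtain x0 where x0: "\<bar>x0\<bar> < R" "\<bar>x - x0\<bar> < T - t"
    using assms(1) by (auto simp: dependence_cone_def)
  have "\<bar>\<sigma> * (t - s)\<bar> \<le> t - s"
    using assms(2,3) by (simp add: abs_mult mult_left_le_one_le)
  then have "\<bar>x + \<sigma> * (t - s) - x0\<bar> < T - s"
    using x0(2) by linarith
  then show ?thesis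
    using x0(1) assms(2) by (auto simp: dependence_cone_def)
qed

lemma characteristic_foot_in_ball:
  assumes "(x, t) \<in> dependence_cone R T" "\<bar>\<sigma>\<bar> \<le> 1"
  shows "\<bar>x + \<sigma> * t\<bar> < R + T"
proof -
  obtain x0 where x0: "0 \<le> t" "\<bar>x0\<bar> < R" "\<bar>x - x0\<bar> < T - t"
    using assms(1) by (auto simp: dependence_cone_def)
  have "\<bar>\<sigma> * t\<bar> \<le> t"
    using x0(1) assms(2) by (simp add: abs_mult mult_left_le_one_le)
  then show ?thesis
    using x0 by linarith
qed

lemma integral_rescale_unit_interval:
  fixes h :: "real \<Rightarrow> real"
  assumes "t \<ge> 0"
  shows "integral {0..t} h = t * integral {0..1} (\<lambda>u. h (t * u))"
proof (cases "t = 0")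
  case False
  with assms have "t > 0" by simp
  then have "(\<lambda>x. x / t) ` {0..t} = {0..1}"
    by (auto simp: image_iff field_simps intro!: bexI[where x="t * _"])
  with integral_stretch_real[of t 0 t h] \<open>t > 0\<close> show ?thesis
    by simp
qed simp

lemma integrable_along_characteristic:
  fixes N :: "real \<Rightarrow> real \<Rightarrow> real"
  assumes "continuous_on (dependence_cone R T) (\<lambda>(y, s). N y s)"
    and "(x, t) \<in> dependence_cone R T" "\<bar>\<sigma>\<bar> \<le> 1"
  shows "(\<lambda>s. N (x + \<sigma> * (t - s)) s) integrable_on {0..t}"
proof -
  have "continuous_on {0..t} (\<lambda>s. (x + \<sigma> * (t - s), s))"
    by (intro continuous_intros)
  moreover have "(\<lambda>s. (x + \<sigma> * (t - s), s)) ` {0..t} \<subseteq> dependence_cone R T"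
    using characteristic_in_dependence_cone[OF assms(2) _ assms(3)] by auto
  ultimately have "continuous_on {0..t} (\<lambda>s. N (x + \<sigma> * (t - s)) s)"
    using continuous_on_compose2[OF assms(1)] by fastforce
  then show ?thesis
    by (rule integrable_continuous_interval)
qed

lemma rescaled_characteristic_in_dependence_cone:
  assumes "(x, t) \<in> dependence_cone R T" "u \<in> {0..1}" "\<bar>\<sigma>\<bar> \<le> 1"
  shows "(x + \<sigma> * (t - t * u), t * u) \<in> dependence_cone R T"
proof -
  have "t * u \<in> {0..t}"
    using dependence_cone_nonneg[OF assms(1)] assms(2) by (auto simp: mult_left_le)
  then show ?thesis
    by (rule characteristic_in_dependence_cone[OF assms(1) _ assms(3)])
qed

lemma continuous_on_integral_along_characteristic:
  fixes N :: "real \<Rightarrow> real \<Rightarrow> real"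
  assumes "continuous_on (dependence_cone R T) (\<lambda>(y, s). N y s)" "\<bar>\<sigma>\<bar> \<le> 1"
  shows "continuous_on (dependence_cone R T) (\<lambda>(x, t). integral {0..t} (\<lambda>s. N (x + \<sigma> * (t - s)) s))"
proof -
  define c where "c w = (fst (fst w) + \<sigma> * (snd (fst w) - snd (fst w) * snd w), snd (fst w) * snd w)"
    for w :: "(real \<times> real) \<times> real"
  have "c ` (dependence_cone R T \<times> cbox 0 1) \<subseteq> dependence_cone R T"
    using rescaled_characteristic_in_dependence_cone[OF _ _ assms(2)] by (auto simp: c_def)
  moreover have "continuous_on (dependence_cone R T \<times> cbox 0 1) c"
    unfolding c_def by (intro continuous_intros)
  ultimately have "continuous_on (dependence_cone R T \<times> cbox 0 1) (\<lambda>w. case c w of (y, s) \<Rightarrow> N y s)"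
    using continuous_on_compose2[OF assms(1)] by blast
  then have "continuous_on (dependence_cone R T)
      (\<lambda>(x, t). integral {0..1} (\<lambda>u. N (x + \<sigma> * (t - t * u)) (t * u)))"
    using integral_continuous_on_param[where a=0 and b="1::real"] by (simp add: c_def case_prod_beta)
  then have rescaled: "continuous_on (dependence_cone R T)
      (\<lambda>(x, t). t * integral {0..1} (\<lambda>u. N (x + \<sigma> * (t - t * u)) (t * u)))"
    unfolding case_prod_beta by (intro continuous_intros)
  have rescale_eq: "integral {0..t} (\<lambda>s. N (x + \<sigma> * (t - s)) s)
      = t * integral {0..1} (\<lambda>u. N (x + \<sigma> * (t - t * u)) (t * u))"
    if "(x, t) \<in> dependence_cone R T" for x t
    by (rule integral_rescale_unit_interval[OF dependence_cone_nonneg[OF that]])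
  from rescaled show ?thesis
    by (rule continuous_on_cong[THEN iffD1, OF refl, rotated]) (auto simp: rescale_eq split: prod.split)
qed

lemma continuous_on_Nl:
  assumes "continuous_on S (\<lambda>(x, s). \<phi> x s)" "continuous_on S (\<lambda>(x, s). \<psi> x s)"
    and "0 < p" "\<And>x s. (x, s) \<in> S \<Longrightarrow> 0 \<le> s"
  shows "continuous_on S (\<lambda>(x, s). Nl p \<mu> \<phi> \<psi> x s)"
  using assms unfolding Nl_def case_prod_beta
  by (intro continuous_intros continuous_on_powr') (auto simp: add_nonneg_eq_0_iff)

definition characteristic_update ::
    "real \<Rightarrow> (real \<Rightarrow> real) \<Rightarrow> (real \<Rightarrow> real \<Rightarrow> real) \<Rightarrow> real \<Rightarrow> real \<Rightarrow> real" where
  "characteristic_update \<sigma> h N x t = h (x + \<sigma> * t) + integral {0..t} (\<lambda>s. N (x + \<sigma> * (t - s)) s)"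

lemma continuous_on_characteristic_update:
  assumes "continuous_on {y. \<bar>y\<bar> < R + T} h" "continuous_on (dependence_cone R T) (\<lambda>(y, s). N y s)"
    and "\<bar>\<sigma>\<bar> \<le> 1"
  shows "continuous_on (dependence_cone R T) (\<lambda>(x, t). characteristic_update \<sigma> h N x t)"
proof -
  have "continuous_on (dependence_cone R T) (\<lambda>z. fst z + \<sigma> * snd z)"
    by (intro continuous_intros)
  moreover have "(\<lambda>z. fst z + \<sigma> * snd z) ` dependence_cone R T \<subseteq> {y. \<bar>y\<bar> < R + T}"
    using characteristic_foot_in_ball[OF _ assms(3)] by auto
  ultimately have "continuous_on (dependence_cone R T) (\<lambda>z. h (fst z + \<sigma> * snd z))"
    by (rule continuous_on_compose2[OF assms(1)])
  with continuous_on_integral_along_characteristic[OF assms(2,3)] show ?thesis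
    unfolding characteristic_update_def case_prod_beta by (rule continuous_on_add[rotated])
qed

lemma characteristic_update_mono:
  assumes "continuous_on (dependence_cone R T) (\<lambda>(y, s). N y s)"
    and "continuous_on (dependence_cone R T) (\<lambda>(y, s). N' y s)"
    and "\<And>y s. (y, s) \<in> dependence_cone R T \<Longrightarrow> N y s \<le> N' y s"
    and "(x, t) \<in> dependence_cone R T" "\<bar>\<sigma>\<bar> \<le> 1"
  shows "characteristic_update \<sigma> h N x t \<le> characteristic_update \<sigma> h N' x t"
proof -
  have "integral {0..t} (\<lambda>s. N (x + \<sigma> * (t - s)) s)
      \<le> integral {0..t} (\<lambda>s. N' (x + \<sigma> * (t - s)) s)"
    using assms(3) characteristic_in_dependence_cone[OF assms(4) _ assms(5)]
    by (intro integral_le integrable_along_characteristic[OF assms(1,4,5)]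
        integrable_along_characteristic[OF assms(2,4,5)]) auto
  then show ?thesis
    by (simp add: characteristic_update_def)
qed

lemma characteristic_update_lower_bound:
  assumes "continuous_on (dependence_cone R T) (\<lambda>(y, s). N y s)"
    and "\<And>y s. (y, s) \<in> dependence_cone R T \<Longrightarrow> 0 \<le> N y s"
    and "\<And>y. \<bar>y\<bar> < R + T \<Longrightarrow> c \<le> h y"
    and "(x, t) \<in> dependence_cone R T" "\<bar>\<sigma>\<bar> \<le> 1"
  shows "c \<le> characteristic_update \<sigma> h N x t"
proof -
  have "c \<le> characteristic_update \<sigma> h (\<lambda>_ _. 0) x t"
    using assms(3)[OF characteristic_foot_in_ball[OF assms(4,5)]]
    by (simp add: characteristic_update_def)
  also have "\<dots> \<le> characteristic_update \<sigma> h N x t"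
    by (rule characteristic_update_mono[OF _ assms(1) _ assms(4,5)]) (simp_all add: assms(2))
  finally show ?thesis .
qed

locale characteristic_iteration =
  fixes p \<mu> \<gamma>1 \<gamma>2 :: real and f g :: "real \<Rightarrow> real" and R T :: real
  assumes p_ge_1: "1 \<le> p"
    and f_continuous: "continuous_on {y. \<bar>y\<bar> < R + T} f"
    and g_continuous: "continuous_on {y. \<bar>y\<bar> < R + T} g"
begin

abbreviation \<phi> :: "nat \<Rightarrow> real \<Rightarrow> real \<Rightarrow> real" where
  "\<phi> n \<equiv> fst (iter p \<mu> \<gamma>1 \<gamma>2 f g n)"

abbreviation \<psi> :: "nat \<Rightarrow> real \<Rightarrow> real \<Rightarrow> real" where
  "\<psi> n \<equiv> snd (iter p \<mu> \<gamma>1 \<gamma>2 f g n)"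

lemma \<phi>_Suc: "\<phi> (Suc n) = characteristic_update 1 f (Nl p \<mu> (\<phi> n) (\<psi> n))"
  and \<psi>_Suc: "\<psi> (Suc n) = characteristic_update (-1) g (Nl p \<mu> (\<phi> n) (\<psi> n))"
  by (simp_all add: characteristic_update_def fun_eq_iff algebra_simps Let_def)

declare iter.simps(2) [simp del]

lemma continuous_on_iterates:
  "continuous_on (dependence_cone R T) (\<lambda>(x, t). \<phi> n x t) \<and>
   continuous_on (dependence_cone R T) (\<lambda>(x, t). \<psi> n x t)"
proof (induction n)
  case (Suc n)
  then have "continuous_on (dependence_cone R T) (\<lambda>(y, s). Nl p \<mu> (\<phi> n) (\<psi> n) y s)"
    using p_ge_1 dependence_cone_nonneg by (intro continuous_on_Nl) auto
  then show ?case
    unfolding \<phi>_Suc \<psi>_Suc using f_continuous g_continuous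
    by (auto intro: continuous_on_characteristic_update)
qed simp

lemma continuous_on_Nl_iterates:
  "continuous_on (dependence_cone R T) (\<lambda>(y, s). Nl p \<mu> (\<phi> n) (\<psi> n) y s)"
  using continuous_on_iterates p_ge_1 dependence_cone_nonneg by (intro continuous_on_Nl) auto

lemma iterates_increasing:
  assumes threshold: "\<mu> \<le> ((\<gamma>1 + \<gamma>2) / 2) powr (p - 1)" and "0 \<le> \<gamma>1 + \<gamma>2"
    and f_ge: "\<And>y. \<bar>y\<bar> < R + T \<Longrightarrow> \<gamma>1 \<le> f y"
    and g_ge: "\<And>y. \<bar>y\<bar> < R + T \<Longrightarrow> \<gamma>2 \<le> g y"
    and "(x, t) \<in> dependence_cone R T"
  shows "\<phi> n x t \<le> \<phi> (Suc n) x t \<and> \<gamma>1 \<le> \<phi> n x t \<and>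
         \<psi> n x t \<le> \<psi> (Suc n) x t \<and> \<gamma>2 \<le> \<psi> n x t"
  using assms(5)
proof (induction n arbitrary: x t)
  case 0
  have N0_nonneg: "0 \<le> Nl p \<mu> (\<phi> 0) (\<psi> 0) y s" if "(y, s) \<in> dependence_cone R T" for y s
    using Nl_profile_nonneg[OF p_ge_1 threshold] assms(2) dependence_cone_nonneg[OF that]
    by (simp add: Nl_eq_Nl_profile)
  have "\<gamma>1 \<le> \<phi> 1 x t"
    unfolding One_nat_def \<phi>_Suc
    by (rule characteristic_update_lower_bound[OF continuous_on_Nl_iterates N0_nonneg f_ge 0]) simp_all
  moreover have "\<gamma>2 \<le> \<psi> 1 x t"
    unfolding One_nat_def \<psi>_Suc
    by (rule characteristic_update_lower_bound[OF continuous_on_Nl_iterates N0_nonneg g_ge 0]) simp_all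
  ultimately show ?case
    by simp
next
  case (Suc n)
  have "Nl p \<mu> (\<phi> n) (\<psi> n) y s \<le> Nl p \<mu> (\<phi> (Suc n)) (\<psi> (Suc n)) y s"
    if "(y, s) \<in> dependence_cone R T" for y s
    using Suc.IH[OF that] Nl_profile_mono[OF p_ge_1 threshold] assms(2) dependence_cone_nonneg[OF that]
    by (simp add: Nl_eq_Nl_profile)
  then have "characteristic_update \<sigma> h (Nl p \<mu> (\<phi> n) (\<psi> n)) x t
      \<le> characteristic_update \<sigma> h (Nl p \<mu> (\<phi> (Suc n)) (\<psi> (Suc n))) x t"
    if "\<bar>\<sigma>\<bar> \<le> 1" for \<sigma> h
    by (intro characteristic_update_mono[OF continuous_on_Nl_iterates continuous_on_Nl_iterates _ Suc.prems that])
  from this[of 1 f] this[of "-1" g]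
  have "\<phi> (Suc n) x t \<le> \<phi> (Suc (Suc n)) x t" "\<psi> (Suc n) x t \<le> \<psi> (Suc (Suc n)) x t"
    by (simp_all only: \<phi>_Suc \<psi>_Suc abs_minus abs_one order_refl simp_thms)
  with Suc.IH[OF Suc.prems] show ?case
    by linarith
qed

end

theorem lemma4p1:
  fixes p \<mu> R T \<gamma>1 \<gamma>2 :: real and f g :: "real \<Rightarrow> real"
  assumes "p > 1" and "\<mu> > 0" and "p < 1 + 2 / \<mu>"
    and "R > 0" and "T > 0"
    and "\<gamma>1 > 0" and "\<gamma>2 > 0"
    and "\<gamma>1 + \<gamma>2 > max 1 ((\<mu> * p * 2 powr p) powr (1 / (p - 1)))"
    and "continuous_on {x. \<bar>x\<bar> < R + T} f" and "continuous_on {x. \<bar>x\<bar> < R + T} g"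
    and "\<forall>x. \<bar>x\<bar> < R + T \<longrightarrow> f x \<ge> \<gamma>1 \<and> g x \<ge> \<gamma>2"
  shows "\<forall>n. \<forall>(x, t) \<in> Kset R T.
     fst (iter p \<mu> \<gamma>1 \<gamma>2 f g (Suc n)) x t \<ge> fst (iter p \<mu> \<gamma>1 \<gamma>2 f g n) x t
   \<and> fst (iter p \<mu> \<gamma>1 \<gamma>2 f g n) x t \<ge> 0
   \<and> snd (iter p \<mu> \<gamma>1 \<gamma>2 f g (Suc n)) x t \<ge> snd (iter p \<mu> \<gamma>1 \<gamma>2 f g n) x t
   \<and> snd (iter p \<mu> \<gamma>1 \<gamma>2 f g n) x t \<ge> 0"
proof -
  interpret characteristic_iteration p \<mu> \<gamma>1 \<gamma>2 f g R T
    using assms(1,9,10) by unfold_locales auto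
  have threshold: "\<mu> \<le> ((\<gamma>1 + \<gamma>2) / 2) powr (p - 1)"
    using assms(1,2,8) by (intro threshold_le_half_powr) auto
  have increasing: "\<phi> n x t \<le> \<phi> (Suc n) x t \<and> \<gamma>1 \<le> \<phi> n x t \<and>
      \<psi> n x t \<le> \<psi> (Suc n) x t \<and> \<gamma>2 \<le> \<psi> n x t"
    if "(x, t) \<in> Kset R T" for n x t
  proof (rule iterates_increasing[OF threshold])
    show "(x, t) \<in> dependence_cone R T"
      using Kset_subset_dependence_cone that by blast
  qed (use assms(6,7,11) in auto)
  show ?thesis
  proof (intro allI ballI, clarify)
    fix n x t
    assume "(x, t) \<in> Kset R T"
    from increasing[OF this, of n] assms(6,7)
    show "\<phi> n x t \<le> \<phi> (Suc n) x t \<and> 0 \<le> \<phi> n x t \<and>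
      \<psi> n x t \<le> \<psi> (Suc n) x t \<and> 0 \<le> \<psi> n x t"
      by auto
  qed
qed

end
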